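(* Let $0<p<1-1/e^2$ be constant, $b=\frac1{1-p}$, and $\gamma(n)=2\log_b n-2\log_b\log_b n-2\log_b 2$. Let $k=k(n)$ be positive integers with $\frac nk-\gamma(n)=O(1)$. Then, as $n\to\infty$, \[\frac{\mu_{n,k+1}}{\mu_{n,k}}\ge(1+o(1))\, b^{\frac{n^2}{2k(k+1)}-\frac{n}{2k}}.\]
   Context: For $n\in\mathbb{N}$ let $m(n)=\lfloor p\binom n2\rfloor$ and $G\sim\mathcal{G}(n,m(n))$, the uniform random graph on $n$ labelled vertices with exactly $m(n)$ edges. An ordered $k$-equipartition of $[n]$ is an ordered partition into $k$ parts each of size $\lceil n/k\rceil$ or $\lfloor n/k\rfloor$, the larger parts listed first. Let $X_{n,k}$ be the number of ordered $k$-equipartitions all of whose parts are independent in $G$, and $\mu_{n,k}=\mathbb{E}[X_{n,k}]$. *)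

theory Defs
  imports Complex_Main "HOL-Library.Landau_Symbols"
begin

definition all_pairs :: "nat \<Rightarrow> nat set set" where
  "all_pairs n = {e. e \<subseteq> {0..<n} \<and> card e = 2}"

text \<open>Support of G(n,m): all edge sets with exactly m edges (uniform distribution).\<close>
definition graphs_nm :: "nat \<Rightarrow> nat \<Rightarrow> nat set set set" where
  "graphs_nm n m = {E. E \<subseteq> all_pairs n \<and> card E = m}"

definition m_of :: "real \<Rightarrow> nat \<Rightarrow> nat" where
  "m_of p n = nat \<lfloor>p * real (n choose 2)\<rfloor>"

definition ordered_equipartition :: "nat \<Rightarrow> nat \<Rightarrow> (nat \<Rightarrow> nat set) \<Rightarrow> bool" where
  "ordered_equipartition n k P \<longleftrightarrow>
     (\<forall>i. i \<ge> k \<longrightarrow> P i = {}) \<and>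
     (\<Union>i<k. P i) = {0..<n} \<and>
     (\<forall>i<k. \<forall>j<k. i \<noteq> j \<longrightarrow> P i \<inter> P j = {}) \<and>
     (\<forall>i<k. card (P i) = nat \<lceil>real n / real k\<rceil> \<or> card (P i) = n div k) \<and>
     (\<forall>i<k. \<forall>j<k. i < j \<longrightarrow> card (P j) \<le> card (P i))"

definition independent_in :: "nat set set \<Rightarrow> nat set \<Rightarrow> bool" where
  "independent_in E S \<longleftrightarrow> (\<forall>e\<in>E. \<not> e \<subseteq> S)"

definition X_count :: "nat \<Rightarrow> nat \<Rightarrow> nat set set \<Rightarrow> nat" where
  "X_count n k E = card {P. ordered_equipartition n k P \<and> (\<forall>i<k. independent_in E (P i))}"

text \<open>mu_{n,k} = E[X_{n,k}] for G ~ G(n, m(n)), m(n) = floor(p * C(n,2)).\<close>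
definition mu :: "real \<Rightarrow> nat \<Rightarrow> nat \<Rightarrow> real" where
  "mu p n k = (\<Sum>E\<in>graphs_nm n (m_of p n). real (X_count n k E)) / real (card (graphs_nm n (m_of p n)))"

end

theory Submission
  imports Defs "HOL-Combinatorics.Multiset_Permutations" "HOL-Real_Asymp.Real_Asymp"
begin

text \<open>By linearity of expectation, \<open>mu p n k\<close> is the number of ordered \<open>k\<close>-equipartitions times
  \<open>C(N - F, m) / C(N, m)\<close>, where \<open>N = C(n, 2)\<close>, \<open>m = m(n)\<close> and \<open>F\<close> is the number of pairs lying
  inside a part. If \<open>n / k < k\<close>, passing to \<open>k + 1\<close> parts does not decrease the number of
  equipartitions (the product of the factorials of the part sizes does not grow) and frees at least
  \<open>E = n\<^sup>2 / (2k(k + 1)) - n / (2k)\<close> pairs. Each freed pair multiplies the binomial coefficient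
  by at least \<open>N / (N - m) \<ge> b (1 - O(1 / N))\<close>, so the ratio is at least \<open>(1 - O(E / N)) b\<^sup>E\<close>;
  since \<open>n / k = O(log n)\<close>, \<open>E / N = O(log\<^sup>2 n / n\<^sup>2)\<close> tends to \<open>0\<close>.\<close>

lemma sum_lessThan_if_less:
  "r \<le> k \<Longrightarrow> (\<Sum>i<k. if i < r then (a::nat) else b) = r * a + (k - r) * b"
proof -
  assume "r \<le> k"
  then have "{..<k} = {..<r} \<union> {r..<k}" by auto
  then show ?thesis by (simp add: sum.union_disjoint ivl_disj_int_one(2))
qed

lemma prod_lessThan_if_less:
  "r \<le> k \<Longrightarrow> (\<Prod>i<k. if i < r then (a::nat) else b) = a ^ r * b ^ (k - r)"
proof -
  assume "r \<le> k"
  then have "{..<k} = {..<r} \<union> {r..<k}" by auto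
  then show ?thesis by (simp add: prod.union_disjoint ivl_disj_int_one(2))
qed

lemma nat_ceiling_divide:
  assumes "k > 0"
  shows "nat \<lceil>real n / real k\<rceil> = (if n mod k = 0 then n div k else n div k + 1)"
proof -
  have quot: "real n / real k = real (n div k) + real (n mod k) / real k"
    by (rule of_nat_of_nat_div_aux)
  show ?thesis
  proof (cases "n mod k = 0")
    case True
    then show ?thesis using quot by simp
  next
    case False
    have "0 < real (n mod k) / real k" "real (n mod k) / real k \<le> 1"
      using False assms by simp_all
    then have "\<lceil>real n / real k\<rceil> = int (n div k) + 1"
      using quot by (intro ceiling_unique) simp_all
    then show ?thesis using False by simp
  qed
qed

lemma downward_closed_eq_lessThan:
  fixes S :: "nat set"
  assumes "finite S" and "\<And>i j. j \<in> S \<Longrightarrow> i \<le> j \<Longrightarrow> i \<in> S"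
  shows "S = {..<card S}"
proof (intro set_eqI iffI)
  fix m assume "m \<in> S"
  then have "{..m} \<subseteq> S" using assms(2) by blast
  then have "card {..m} \<le> card S" using assms(1) by (rule card_mono[rotated])
  then show "m \<in> {..<card S}" by simp
next
  fix m assume m: "m \<in> {..<card S}"
  show "m \<in> S"
  proof (rule ccontr)
    assume "m \<notin> S"
    then have "S \<subseteq> {..<m}" using assms(2) by (meson lessThan_iff not_le subsetI)
    then have "card S \<le> m" using card_mono[of "{..<m}" S] by simp
    then show False using m by simp
  qed
qed

definition part_size :: "nat \<Rightarrow> nat \<Rightarrow> nat \<Rightarrow> nat" where
  "part_size n k i = (if i < n mod k then n div k + 1 else n div k)"

lemma sum_part_size:
  assumes "k > 0"
  shows "(\<Sum>i<k. part_size n k i) = n"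
proof -
  define q r where "q = n div k" and "r = n mod k"
  have r: "r \<le> k" using assms unfolding r_def by (simp add: less_imp_le)
  then obtain s where s: "k = r + s" using le_Suc_ex by blast
  have "(\<Sum>i<k. part_size n k i) = r * (q + 1) + (k - r) * q"
    unfolding part_size_def q_def[symmetric] r_def[symmetric] using r by (rule sum_lessThan_if_less)
  also have "\<dots> = k * q + r" using s by (simp add: algebra_simps)
  also have "\<dots> = n" unfolding q_def r_def by simp
  finally show ?thesis .
qed

lemma sum_card_parts:
  assumes "ordered_equipartition n k P"
  shows "(\<Sum>i<k. card (P i)) = n"
proof -
  have parts: "\<And>i. i < k \<Longrightarrow> P i \<subseteq> {0..<n}"
    and disj: "\<forall>i<k. \<forall>j<k. i \<noteq> j \<longrightarrow> P i \<inter> P j = {}"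
    and union: "(\<Union>i<k. P i) = {0..<n}"
    using assms unfolding ordered_equipartition_def by blast+
  have fin: "\<And>i. i < k \<Longrightarrow> finite (P i)" using parts finite_subset by blast
  have "(\<Sum>i<k. card (P i)) = card (\<Union>i<k. P i)"
    by (rule card_UN_disjoint[symmetric]) (use fin disj in auto)
  then show ?thesis unfolding union by simp
qed

lemma card_part_eq_part_size:
  assumes k: "k > 0" and P: "ordered_equipartition n k P" and i: "i < k"
  shows "card (P i) = part_size n k i"
proof -
  define q where "q = n div k"
  define big where "big = {j. j < k \<and> card (P j) = q + 1}"
  have sizes: "\<And>j. j < k \<Longrightarrow> card (P j) = q \<or> card (P j) = q + 1"
    using P nat_ceiling_divide[OF k, of n] unfolding ordered_equipartition_def q_def
    by (auto split: if_splits)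
  have antimono: "\<And>i j. i < j \<Longrightarrow> j < k \<Longrightarrow> card (P j) \<le> card (P i)"
    using P unfolding ordered_equipartition_def by auto
  have "n = (\<Sum>j<k. card (P j))" using sum_card_parts[OF P] by simp
  also have "\<dots> = (\<Sum>j<k. q + (if card (P j) = q + 1 then 1 else 0))"
    by (rule sum.cong) (use sizes in auto)
  also have "\<dots> = k * q + card big"
    unfolding big_def by (simp add: sum.distrib sum.If_cases Int_def)
  finally have card_big: "card big = n mod k"
    using mult_div_mod_eq[of k n] unfolding q_def by linarith
  have "big = {..<card big}"
  proof (rule downward_closed_eq_lessThan)
    show "finite big" unfolding big_def by simp
    fix i j assume "j \<in> big" "i \<le> j"
    then show "i \<in> big" using antimono[of i j] sizes[of i] unfolding big_def by (cases "i = j") auto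
  qed
  then have "i \<in> big \<longleftrightarrow> i < n mod k" using card_big by (metis lessThan_iff)
  then have "card (P i) = q + 1 \<longleftrightarrow> i < n mod k" using i unfolding big_def by simp
  then show ?thesis using sizes[OF i] unfolding part_size_def q_def by auto
qed

lemma ordered_equipartitionI:
  assumes k: "k > 0" and "\<forall>i. i \<ge> k \<longrightarrow> P i = {}" and "(\<Union>i<k. P i) = {0..<n}"
    and "\<forall>i<k. \<forall>j<k. i \<noteq> j \<longrightarrow> P i \<inter> P j = {}"
    and sizes: "\<forall>i<k. card (P i) = part_size n k i"
  shows "ordered_equipartition n k P"
  unfolding ordered_equipartition_def
proof (intro conjI)
  show "\<forall>i<k. card (P i) = nat \<lceil>real n / real k\<rceil> \<or> card (P i) = n div k"
    using sizes nat_ceiling_divide[OF k, of n] by (auto simp: part_size_def)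
  show "\<forall>i<k. \<forall>j<k. i < j \<longrightarrow> card (P j) \<le> card (P i)"
    using sizes by (auto simp: part_size_def)
qed (use assms in auto)

section \<open>Counting ordered equipartitions\<close>

text \<open>An ordered equipartition is encoded by the word of length \<open>n\<close> listing the part of each
  vertex; these words are exactly the permutations of a fixed multiset of part labels.\<close>

definition part_label_mset :: "nat \<Rightarrow> nat \<Rightarrow> nat multiset" where
  "part_label_mset n k = (\<Sum>i<k. replicate_mset (part_size n k i) i)"

lemma count_part_label_mset:
  "count (part_label_mset n k) j = (if j < k then part_size n k j else 0)"
proof -
  have "count (part_label_mset n k) j = (\<Sum>i<k. if i = j then part_size n k i else 0)"
    unfolding part_label_mset_def count_sum by (intro sum.cong) auto
  then show ?thesis by (simp add: sum.delta)
qed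

lemma size_part_label_mset: "k > 0 \<Longrightarrow> size (part_label_mset n k) = n"
  unfolding part_label_mset_def by (simp add: sum_part_size)

definition parts_of_labels :: "nat list \<Rightarrow> nat \<Rightarrow> nat set" where
  "parts_of_labels xs i = {j. j < length xs \<and> xs ! j = i}"

lemma card_parts_of_labels: "card (parts_of_labels xs i) = count (mset xs) i"
proof -
  have "card (parts_of_labels xs i) = length (filter ((=) i) xs)"
    unfolding parts_of_labels_def length_filter_conv_card by (metis (no_types, lifting))
  then show ?thesis by (simp add: count_mset count_list_eq_length_filter)
qed

lemma ordered_equipartition_parts_of_labels:
  assumes k: "k > 0" and xs: "mset xs = part_label_mset n k"
  shows "ordered_equipartition n k (parts_of_labels xs)"
proof -
  have len: "length xs = n" using xs size_part_label_mset[OF k, of n] by (metis size_mset)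
  have labels: "xs ! j < k" if "j < length xs" for j
  proof -
    have "xs ! j \<in># mset xs" using that by simp
    then have "count (part_label_mset n k) (xs ! j) > 0" using xs by (simp del: set_mset_mset)
    then show ?thesis by (auto simp: count_part_label_mset split: if_splits)
  qed
  show ?thesis
  proof (rule ordered_equipartitionI[OF k])
    show "\<forall>i. i \<ge> k \<longrightarrow> parts_of_labels xs i = {}"
      using labels unfolding parts_of_labels_def by force
    show "(\<Union>i<k. parts_of_labels xs i) = {0..<n}"
      using labels len unfolding parts_of_labels_def by auto
    show "\<forall>i<k. \<forall>j<k. i \<noteq> j \<longrightarrow> parts_of_labels xs i \<inter> parts_of_labels xs j = {}"
      unfolding parts_of_labels_def by auto
    show "\<forall>i<k. card (parts_of_labels xs i) = part_size n k i"
      using xs by (simp add: card_parts_of_labels count_part_label_mset)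
  qed
qed

lemma inj_on_parts_of_labels: "inj_on parts_of_labels (permutations_of_multiset A)"
proof (rule inj_onI)
  fix xs ys
  assume perms: "xs \<in> permutations_of_multiset A" "ys \<in> permutations_of_multiset A"
    and eq: "parts_of_labels xs = parts_of_labels ys"
  have "length xs = length ys" using perms by (metis permutations_of_multisetD size_mset)
  moreover have "xs ! j = ys ! j" if "j < length xs" for j
  proof -
    have "j \<in> parts_of_labels xs (xs ! j)" using that unfolding parts_of_labels_def by simp
    then have "j \<in> parts_of_labels ys (xs ! j)" using eq by simp
    then show ?thesis unfolding parts_of_labels_def by simp
  qed
  ultimately show "xs = ys" by (rule nth_equalityI)
qed

lemma ordered_equipartition_in_image_parts_of_labels:
  assumes k: "k > 0" and P: "ordered_equipartition n k P"
  shows "P \<in> parts_of_labels ` permutations_of_multiset (part_label_mset n k)"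
proof -
  define label where "label j = (THE i. i < k \<and> j \<in> P i)" for j
  define xs where "xs = map label [0..<n]"
  have union: "(\<Union>i<k. P i) = {0..<n}" and empty: "\<forall>i. i \<ge> k \<longrightarrow> P i = {}"
    and disj: "\<forall>i<k. \<forall>j<k. i \<noteq> j \<longrightarrow> P i \<inter> P j = {}"
    using P unfolding ordered_equipartition_def by auto
  have label_eq: "label j = i" if "i < k" "j \<in> P i" for i j
    unfolding label_def using that disj by (intro the_equality) blast+
  have mem: "j \<in> P i \<longleftrightarrow> j < n \<and> label j = i" for i j
  proof
    assume j: "j \<in> P i"
    then have i: "i < k" using empty by (metis empty_iff not_le)
    then have "j \<in> (\<Union>i<k. P i)" using j by blast
    then show "j < n \<and> label j = i" using union label_eq[OF i j] by simp
  next
    assume j: "j < n \<and> label j = i"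
    then have "j \<in> (\<Union>i<k. P i)" using union by simp
    then obtain i' where i': "i' < k" "j \<in> P i'" by blast
    then show "j \<in> P i" using label_eq[OF i'] j by simp
  qed
  have "parts_of_labels xs i = P i" for i
    using mem unfolding parts_of_labels_def xs_def by (auto simp: set_eq_iff)
  then have parts: "parts_of_labels xs = P" by blast
  have "mset xs = part_label_mset n k"
  proof (rule multiset_eqI)
    fix i
    have "count (mset xs) i = card (P i)" using card_parts_of_labels[of xs i] parts by simp
    then show "count (mset xs) i = count (part_label_mset n k) i"
      using card_part_eq_part_size[OF k P] empty by (simp add: count_part_label_mset)
  qed
  then show ?thesis using parts by (metis image_eqI permutations_of_multisetI)
qed

definition part_fact_prod :: "nat \<Rightarrow> nat \<Rightarrow> nat" where
  "part_fact_prod n k = (\<Prod>i<k. fact (part_size n k i))"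

lemma card_ordered_equipartitions:
  assumes k: "k > 0"
  shows "card {P. ordered_equipartition n k P} * part_fact_prod n k = fact n"
proof -
  let ?A = "part_label_mset n k"
  have "bij_betw parts_of_labels (permutations_of_multiset ?A) {P. ordered_equipartition n k P}"
    unfolding bij_betw_def
    using inj_on_parts_of_labels ordered_equipartition_parts_of_labels[OF k]
      ordered_equipartition_in_image_parts_of_labels[OF k] permutations_of_multisetD
    by blast
  then have card_eq: "card {P. ordered_equipartition n k P} = card (permutations_of_multiset ?A)"
    by (simp add: bij_betw_same_card)
  have "set_mset ?A = {i. i < k \<and> 0 < part_size n k i}"
    by (auto simp: count_part_label_mset simp flip: count_greater_zero_iff split: if_splits)
  then have "(\<Prod>x\<in>set_mset ?A. fact (count ?A x)) = (\<Prod>i\<in>{i. i < k \<and> 0 < part_size n k i}. fact (part_size n k i))"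
    by (intro prod.cong) (auto simp: count_part_label_mset)
  also have "\<dots> = part_fact_prod n k"
    unfolding part_fact_prod_def by (intro prod.mono_neutral_left) auto
  finally show ?thesis
    using card_permutations_of_multiset_aux[of ?A] size_part_label_mset[OF k, of n] card_eq by simp
qed

lemma finite_ordered_equipartitions: "k > 0 \<Longrightarrow> finite {P. ordered_equipartition n k P}"
  using card_ordered_equipartitions[of k n] card.infinite by fastforce

section \<open>The expectation as a product of two counts\<close>

definition inner_pairs :: "nat \<Rightarrow> nat \<Rightarrow> nat" where
  "inner_pairs n k = (\<Sum>i<k. part_size n k i choose 2)"

lemma finite_all_pairs: "finite (all_pairs n)"
  unfolding all_pairs_def by (rule finite_subset[of _ "Pow {0..<n}"]) auto

lemma card_all_pairs: "card (all_pairs n) = n choose 2"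
  unfolding all_pairs_def using n_subsets[of "{0..<n}" 2] by simp

lemma card_graphs_nm: "card (graphs_nm n m) = (n choose 2) choose m"
  unfolding graphs_nm_def using n_subsets[OF finite_all_pairs[of n], of m] card_all_pairs[of n] by simp

lemma finite_graphs_nm: "finite (graphs_nm n m)"
  unfolding graphs_nm_def by (rule finite_subset[of _ "Pow (all_pairs n)"]) (auto simp: finite_all_pairs)

lemma card_pairs_inside_parts:
  assumes k: "k > 0" and P: "ordered_equipartition n k P"
  shows "card {e \<in> all_pairs n. \<exists>i<k. e \<subseteq> P i} = inner_pairs n k"
proof -
  define pairs_in where "pairs_in S = {e. e \<subseteq> S \<and> card e = 2}" for S :: "nat set"
  have parts: "\<And>i. i < k \<Longrightarrow> P i \<subseteq> {0..<n}"
    and disj: "\<And>i j. i < k \<Longrightarrow> j < k \<Longrightarrow> i \<noteq> j \<Longrightarrow> P i \<inter> P j = {}"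
    using P unfolding ordered_equipartition_def by auto
  have fin: "\<And>i. i < k \<Longrightarrow> finite (P i)" using parts finite_subset by blast
  have "{e \<in> all_pairs n. \<exists>i<k. e \<subseteq> P i} = (\<Union>i<k. pairs_in (P i))"
  proof (intro equalityI subsetI)
    fix e assume "e \<in> {e \<in> all_pairs n. \<exists>i<k. e \<subseteq> P i}"
    then show "e \<in> (\<Union>i<k. pairs_in (P i))" unfolding all_pairs_def pairs_in_def by blast
  next
    fix e assume "e \<in> (\<Union>i<k. pairs_in (P i))"
    then obtain i where "i < k" "e \<subseteq> P i" "card e = 2" unfolding pairs_in_def by blast
    then show "e \<in> {e \<in> all_pairs n. \<exists>i<k. e \<subseteq> P i}"
      using parts[of i] unfolding all_pairs_def by blast
  qed
  also have "card \<dots> = (\<Sum>i<k. card (pairs_in (P i)))"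
  proof (rule card_UN_disjoint)
    show "\<forall>i\<in>{..<k}. finite (pairs_in (P i))" unfolding pairs_in_def using fin by simp
    show "\<forall>i\<in>{..<k}. \<forall>j\<in>{..<k}. i \<noteq> j \<longrightarrow> pairs_in (P i) \<inter> pairs_in (P j) = {}"
    proof (intro ballI impI)
      fix i j assume ij: "i \<in> {..<k}" "j \<in> {..<k}" "i \<noteq> j"
      show "pairs_in (P i) \<inter> pairs_in (P j) = {}"
      proof (rule ccontr)
        assume "pairs_in (P i) \<inter> pairs_in (P j) \<noteq> {}"
        then obtain e where "e \<subseteq> P i" "e \<subseteq> P j" "card e = 2" unfolding pairs_in_def by blast
        moreover have "P i \<inter> P j = {}" using disj ij by simp
        ultimately show False by (metis card.empty subset_empty le_inf_iff zero_neq_numeral)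
      qed
    qed
  qed simp
  also have "\<dots> = inner_pairs n k"
    unfolding inner_pairs_def pairs_in_def
    by (intro sum.cong refl) (simp add: n_subsets fin card_part_eq_part_size[OF k P])
  finally show ?thesis .
qed

lemma card_graphs_with_independent_parts:
  assumes k: "k > 0" and P: "ordered_equipartition n k P"
  shows "card {E \<in> graphs_nm n m. \<forall>i<k. independent_in E (P i)}
    = ((n choose 2) - inner_pairs n k) choose m"
proof -
  define inside where "inside = {e \<in> all_pairs n. \<exists>i<k. e \<subseteq> P i}"
  have sub: "inside \<subseteq> all_pairs n" unfolding inside_def by blast
  then have "finite inside" using finite_all_pairs by (rule finite_subset)
  then have card_cross: "card (all_pairs n - inside) = (n choose 2) - inner_pairs n k"
    using card_Diff_subset[OF _ sub] card_pairs_inside_parts[OF k P] card_all_pairs[of n]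
    unfolding inside_def by simp
  have "{E \<in> graphs_nm n m. \<forall>i<k. independent_in E (P i)} = {E. E \<subseteq> all_pairs n - inside \<and> card E = m}"
    unfolding graphs_nm_def inside_def independent_in_def by blast
  also have "card \<dots> = card (all_pairs n - inside) choose m"
    by (rule n_subsets) (simp add: finite_all_pairs)
  finally show ?thesis using card_cross by simp
qed

text \<open>Double counting the pairs (graph, equipartition with independent parts).\<close>

lemma mu_mult_card_graphs_nm:
  assumes k: "k > 0"
  shows "mu p n k * real (card (graphs_nm n (m_of p n))) =
    real (card {P. ordered_equipartition n k P}) * real (((n choose 2) - inner_pairs n k) choose m_of p n)"
proof -
  define G where "G = graphs_nm n (m_of p n)"
  define EQ where "EQ = {P. ordered_equipartition n k P}"
  define good where "good E P \<longleftrightarrow> (\<forall>i<k. independent_in E (P i))" for E P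
  have fin: "finite G" "finite EQ"
    unfolding G_def EQ_def by (simp_all add: finite_graphs_nm finite_ordered_equipartitions[OF k])
  have "(\<Sum>E\<in>G. real (X_count n k E)) = (\<Sum>E\<in>G. \<Sum>P\<in>EQ. if good E P then 1 else 0)"
    using fin unfolding X_count_def EQ_def good_def
    by (intro sum.cong refl) (simp add: sum.inter_filter[symmetric] conj_commute)
  also have "\<dots> = (\<Sum>P\<in>EQ. \<Sum>E\<in>G. if good E P then 1 else 0)"
    by (rule sum.swap)
  also have "\<dots> = (\<Sum>P\<in>EQ. real (((n choose 2) - inner_pairs n k) choose m_of p n))"
    using fin card_graphs_with_independent_parts[OF k]
    unfolding G_def EQ_def good_def by (intro sum.cong refl) (simp add: sum.inter_filter[symmetric])
  finally have sum_eq: "(\<Sum>E\<in>G. real (X_count n k E))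
      = real (card EQ) * real (((n choose 2) - inner_pairs n k) choose m_of p n)" by simp
  show ?thesis
  proof (cases "G = {}")
    case True
    then show ?thesis using sum_eq unfolding mu_def G_def EQ_def by simp
  next
    case False
    then show ?thesis using sum_eq fin unfolding mu_def G_def EQ_def by simp
  qed
qed

section \<open>From \<open>k\<close> to \<open>k + 1\<close> parts\<close>

lemma div_mod_Suc_divisor_cases:
  fixes n k :: nat
  assumes "k > 0" and "n div k < k"
  obtains (mod_ge) t u where "n mod k = n div k + t" and "k = n mod k + u + 1"
      and "n div (k + 1) = n div k" and "n mod (k + 1) = t"
  | (mod_lt) d e where "n div k = n mod k + d + 1" and "k = n div k + e"
      and "n div (k + 1) = n mod k + d" and "n mod (k + 1) = n mod k + e + 1"
proof -
  define q r where "q = n div k" and "r = n mod k"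
  have n: "n = q * k + r" and r: "r < k" using assms(1) unfolding q_def r_def by simp_all
  show thesis
  proof (cases "q \<le> r")
    case True
    then obtain t where t: "r = q + t" using le_Suc_ex by blast
    obtain u where u: "k = r + u + 1" using r less_imp_Suc_add by fastforce
    have "n = t + q * (k + 1)" and "t < k + 1" using n t u by (simp_all add: algebra_simps)
    then have "n div (k + 1) = q" "n mod (k + 1) = t"
      using div_mult_self1[of "k + 1" t q] mod_mult_self1[of t q "k + 1"] by simp_all
    then show thesis using mod_ge t u unfolding q_def r_def by blast
  next
    case False
    then obtain d where d: "q = r + d + 1" using less_imp_Suc_add[of r q] by auto
    obtain e where e: "k = q + e" using assms(2) le_Suc_ex less_imp_le unfolding q_def by blast
    have "n = (r + e + 1) + (r + d) * (k + 1)" and "r + e + 1 < k + 1"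
      using n d e by (simp_all add: algebra_simps)
    then have "n div (k + 1) = r + d" "n mod (k + 1) = r + e + 1"
      using div_mult_self1[of "k + 1" "r + e + 1" "r + d"]
        mod_mult_self1[of "r + e + 1" "r + d" "k + 1"] by simp_all
    then show thesis using mod_lt d e unfolding q_def r_def by blast
  qed
qed

lemma part_fact_prod_eq:
  "k > 0 \<Longrightarrow> part_fact_prod n k = fact (n div k + 1) ^ (n mod k) * fact (n div k) ^ (k - n mod k)"
  unfolding part_fact_prod_def part_size_def
  by (subst prod_lessThan_if_less[symmetric]) (auto intro!: prod.cong simp: less_imp_le)

lemma part_fact_prod_pos: "part_fact_prod n k > 0"
  unfolding part_fact_prod_def by (intro prod_pos) simp

lemma part_fact_prod_Suc_le:
  assumes k: "k > 0" and small: "n div k < k"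
  shows "part_fact_prod n (k + 1) \<le> part_fact_prod n k"
proof -
  define q r where "q = n div k" and "r = n mod k"
  have before: "part_fact_prod n k = fact (q + 1) ^ r * fact q ^ (k - r)"
    unfolding q_def r_def by (rule part_fact_prod_eq[OF k])
  have after: "part_fact_prod n (k + 1)
      = fact (n div (k + 1) + 1) ^ (n mod (k + 1)) * fact (n div (k + 1)) ^ (k + 1 - n mod (k + 1))"
    by (rule part_fact_prod_eq) simp
  from k small show ?thesis
  proof (cases rule: div_mod_Suc_divisor_cases)
    case (mod_ge t u)
    note shape = mod_ge[folded q_def r_def]
    have after_exps: "n div (k + 1) = q" "n mod (k + 1) = t" "k + 1 - t = q + u + 2"
      and before_exps: "r = q + t" "k - (q + t) = u + 1"
      using shape by simp_all
    have fact_Suc_q: "fact (q + 1) = (q + 1) * (fact q :: nat)" by simp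
    define A :: nat where "A = fact (q + 1) ^ t * fact q ^ (q + u + 1)"
    have "part_fact_prod n (k + 1) = A * fact q"
      unfolding after after_exps A_def
      by (simp only: power_add mult_ac power_one_right numeral_2_eq_2 power_Suc power_0 mult_1_left)
    moreover have "part_fact_prod n k = A * (q + 1) ^ q"
      unfolding before before_exps A_def using fact_Suc_q by (simp only: power_add power_mult_distrib mult_ac)
    moreover have "fact q \<le> (q + 1) ^ q"
      using fact_le_power[of q, where 'a = nat] power_mono[of q "q + 1" q] by simp
    ultimately show ?thesis by simp
  next
    case (mod_lt d e)
    note shape = mod_lt[folded q_def r_def]
    have after_exps: "n div (k + 1) = r + d" "r + d + 1 = q" "n mod (k + 1) = r + e + 1"
      "k + 1 - (r + e + 1) = d + 1"
      and before_exps: "k - r = d + 1 + e"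
      using shape by simp_all
    define f :: nat where "f = fact (r + d)"
    define A :: nat where "A = fact q ^ (r + e + 1) * f ^ d"
    have fact_q: "fact q = q * f" unfolding f_def using shape(1) by simp
    then have fact_Suc_q: "fact (q + 1) = (q + 1) * q * f" by (simp add: algebra_simps)
    have "part_fact_prod n (k + 1) = A * f"
      unfolding after after_exps f_def[symmetric] A_def by (simp only: power_add mult_ac power_one_right)
    moreover have "part_fact_prod n k = A * (q ^ d * (q + 1) ^ r)"
      unfolding before before_exps A_def using fact_q fact_Suc_q
      by (simp only: power_add power_mult_distrib mult_ac power_one_right)
    moreover have "f \<le> q ^ d * (q + 1) ^ r"
    proof -
      have "f \<le> (r + d) ^ (r + d)" unfolding f_def using fact_le_power[of "r + d", where 'a = nat] by simp
      also have "\<dots> \<le> q ^ (r + d)" using shape by (intro power_mono) auto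
      also have "\<dots> \<le> q ^ d * (q + 1) ^ r" by (simp add: power_add power_mono)
      finally show ?thesis .
    qed
    ultimately show ?thesis by simp
  qed
qed

lemma card_ordered_equipartitions_Suc_ge:
  assumes k: "k > 0" and small: "n div k < k"
  shows "card {P. ordered_equipartition n k P} \<le> card {P. ordered_equipartition n (k + 1) P}"
proof -
  have "card {P. ordered_equipartition n k P} * part_fact_prod n (k + 1)
      \<le> card {P. ordered_equipartition n k P} * part_fact_prod n k"
    using part_fact_prod_Suc_le[OF k small] by simp
  also have "\<dots> = card {P. ordered_equipartition n (k + 1) P} * part_fact_prod n (k + 1)"
    using card_ordered_equipartitions[OF k] card_ordered_equipartitions[of "k + 1"] by simp
  finally show ?thesis using part_fact_prod_pos[of n "k + 1"] by simp
qed

lemma two_mult_choose_two_add: "2 * (m choose 2) + m = m * m"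
  by (induction m) (simp_all add: numeral_2_eq_2 algebra_simps)

lemma inner_pairs_eq:
  assumes k: "k > 0"
  shows "k * (2 * inner_pairs n k + n) = n * n + (n mod k) * (k - n mod k)"
proof -
  define q r where "q = n div k" and "r = n mod k"
  have r: "r \<le> k" using k unfolding r_def by (simp add: less_imp_le)
  then obtain s where s: "k = r + s" using le_Suc_ex by blast
  have n: "n = q * k + r" unfolding q_def r_def by simp
  have "2 * inner_pairs n k + n = (\<Sum>i<k. 2 * (part_size n k i choose 2) + part_size n k i)"
    unfolding inner_pairs_def by (simp add: sum.distrib sum_distrib_left sum_part_size[OF k])
  also have "\<dots> = (\<Sum>i<k. part_size n k i * part_size n k i)"
    by (simp add: two_mult_choose_two_add)
  also have "\<dots> = (\<Sum>i<k. if i < r then (q + 1) * (q + 1) else q * q)"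
    unfolding part_size_def q_def r_def by (intro sum.cong) auto
  also have "\<dots> = r * ((q + 1) * (q + 1)) + (k - r) * (q * q)"
    using r by (rule sum_lessThan_if_less)
  finally have sum_sq: "2 * inner_pairs n k + n = r * ((q + 1) * (q + 1)) + (k - r) * (q * q)" .
  have "k * (r * ((q + 1) * (q + 1)) + (k - r) * (q * q)) = n * n + r * (k - r)"
    unfolding n using s by (simp add: algebra_simps)
  then show ?thesis using sum_sq unfolding r_def by simp
qed

lemma mod_Suc_divisor_gap_le:
  fixes n k :: nat
  assumes k: "k > 0" and small: "n div k < k"
  shows "k * (n mod (k + 1) * (k + 1 - n mod (k + 1))) \<le> (k + 1) * (n + n mod k * (k - n mod k))"
proof -
  define q r where "q = n div k" and "r = n mod k"
  have n: "n = q * k + r" unfolding q_def r_def by (rule div_mult_mod_eq[symmetric])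
  from k small show ?thesis
  proof (cases rule: div_mod_Suc_divisor_cases)
    case (mod_ge t u)
    note shape = mod_ge[folded q_def r_def]
    have lhs: "k * (n mod (k + 1) * (k + 1 - n mod (k + 1))) = k * t * q + k * (t * (u + 2))"
      unfolding shape(4) using shape(1,2) by (simp add: algebra_simps)
    have rhs: "(k + 1) * (n + n mod k * (k - n mod k))
        = (k + 1) * (q * k) + (k + 1) * (q + t + (q + t) * (u + 1))"
      unfolding r_def[symmetric] using n shape(1,2) by (simp add: algebra_simps)
    have "k * t * q \<le> (k + 1) * (q * k)"
    proof -
      have "t \<le> k + 1" using shape(1,2) by simp
      then have "k * t * q \<le> k * (k + 1) * q" by (intro mult_le_mono1 mult_le_mono2)
      then show ?thesis by (simp add: algebra_simps)
    qed
    moreover have "k * (t * (u + 2)) \<le> (k + 1) * (q + t + (q + t) * (u + 1))"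
      by (intro mult_le_mono) (simp_all add: algebra_simps)
    ultimately show ?thesis unfolding lhs rhs by linarith
  next
    case (mod_lt d e)
    note shape = mod_lt[folded q_def r_def]
    have lhs: "k * (n mod (k + 1) * (k + 1 - n mod (k + 1))) = k * ((r + e + 1) * (d + 1))"
      unfolding shape(4) using shape(1,2) by simp
    have "(r + e + 1) * (d + 1) \<le> k * q" using shape(1,2) by (intro mult_le_mono) auto
    then have "k * ((r + e + 1) * (d + 1)) \<le> k * (k * q)" by (rule mult_le_mono2)
    also have "\<dots> \<le> (k + 1) * (q * k)" by (simp add: algebra_simps)
    also have "\<dots> \<le> (k + 1) * (n + n mod k * (k - n mod k))" using n by (intro mult_le_mono2) simp
    finally show ?thesis unfolding lhs .
  qed
qed

definition ratio_exponent :: "nat \<Rightarrow> nat \<Rightarrow> real" where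
  "ratio_exponent n k = (real n)\<^sup>2 / (2 * real k * real (k + 1)) - real n / (2 * real k)"

lemma ratio_exponent_le_inner_pairs_diff:
  assumes k: "k > 0" and small: "n div k < k"
  shows "ratio_exponent n k \<le> real (inner_pairs n k) - real (inner_pairs n (k + 1))"
proof -
  define A B where "A = n mod k * (k - n mod k)" and "B = n mod (k + 1) * (k + 1 - n mod (k + 1))"
  have nat_k: "k * (2 * inner_pairs n k + n) = n * n + A"
    using inner_pairs_eq[OF k] unfolding A_def .
  have nat_Suc: "(k + 1) * (2 * inner_pairs n (k + 1) + n) = n * n + B"
    using inner_pairs_eq[of "k + 1" n] unfolding B_def by simp
  have nat_gap: "k * B \<le> (k + 1) * (n + A)"
    using mod_Suc_divisor_gap_le[OF k small] unfolding A_def B_def .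
  have eq_k: "real k * (2 * real (inner_pairs n k) + real n) = real n * real n + real A"
    using arg_cong[OF nat_k, of real] by simp
  have eq_Suc: "(real k + 1) * (2 * real (inner_pairs n (k + 1)) + real n) = real n * real n + real B"
    using arg_cong[OF nat_Suc, of real] by (simp add: algebra_simps)
  have gap: "real k * real B \<le> (real k + 1) * (real n + real A)"
    using nat_gap by (metis of_nat_add of_nat_le_iff of_nat_mult of_nat_1)
  have "2 * real k * (real k + 1) * ((real n)\<^sup>2 / (2 * real k * real (k + 1))) = (real n)\<^sup>2"
    and "2 * real k * (real k + 1) * (real n / (2 * real k)) = (real k + 1) * real n"
    using k by (simp_all add: add.commute)
  then have "2 * real k * (real k + 1) * ratio_exponent n k = (real n)\<^sup>2 - (real k + 1) * real n"
    unfolding ratio_exponent_def right_diff_distrib by simp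
  also have "\<dots> \<le> (real k + 1) * (real n * real n + real A) - real k * (real n * real n + real B)"
    using gap by (simp add: algebra_simps power2_eq_square)
  also have "\<dots> = 2 * real k * (real k + 1) * (real (inner_pairs n k) - real (inner_pairs n (k + 1)))"
    unfolding eq_k[symmetric] eq_Suc[symmetric] by (simp add: algebra_simps)
  finally show ?thesis using k by (simp add: mult_le_cancel_left_pos)
qed

lemma ratio_exponent_nonneg:
  assumes "k > 0" and "k + 1 \<le> n"
  shows "0 \<le> ratio_exponent n k"
proof -
  have "real n / (2 * real k) * 1 \<le> real n / (2 * real k) * (real n / real (k + 1))"
    using assms by (intro mult_left_mono) simp_all
  then show ?thesis unfolding ratio_exponent_def by (simp add: power2_eq_square)
qed

lemma ratio_exponent_le:
  assumes "k > 0"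
  shows "ratio_exponent n k \<le> (real n / real k)\<^sup>2 / 2"
proof -
  have "ratio_exponent n k \<le> (real n)\<^sup>2 / (2 * real k * real (k + 1))"
    unfolding ratio_exponent_def by simp
  also have "\<dots> \<le> (real n)\<^sup>2 / (2 * real k * real k)"
    using assms by (intro divide_left_mono mult_left_mono) auto
  finally show ?thesis by (simp add: power_divide power2_eq_square)
qed

lemma inner_pairs_le:
  assumes "k > 0"
  shows "2 * real (inner_pairs n k) \<le> real n * (real n / real k)"
proof -
  have "n mod k * (k - n mod k) \<le> n * k" by (intro mult_le_mono) auto
  then have "k * (2 * inner_pairs n k) \<le> n * n"
    using inner_pairs_eq[OF assms, of n] by (simp add: algebra_simps)
  then have "real (k * (2 * inner_pairs n k)) \<le> real (n * n)"
    by (simp only: of_nat_le_iff)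
  then have "real k * (2 * real (inner_pairs n k)) \<le> real n * real n" by simp
  then show ?thesis using assms by (simp add: field_simps)
qed

lemma choose_Suc_ge_mult:
  assumes "m \<le> X" and "X < N"
  shows "real N / real (N - m) * real (X choose m) \<le> real (Suc X choose m)"
proof -
  have pos: "real (Suc X - m) > 0" using assms(1) by simp
  have "(Suc X - m) * (Suc X choose m) = Suc X * (X choose m)"
    using binomial_absorb_comp[of "Suc X" m] by simp
  then have "real (Suc X - m) * real (Suc X choose m) = real (Suc X) * real (X choose m)"
    by (metis of_nat_mult)
  then have absorb: "real (Suc X choose m) = real (Suc X) / real (Suc X - m) * real (X choose m)"
    using pos by (simp add: field_simps)
  have "real (Suc X) * real m \<le> real N * real m" using assms(2) by (intro mult_right_mono) simp_all
  then have "real N * real (Suc X - m) \<le> real (Suc X) * real (N - m)"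
    using assms by (simp add: of_nat_diff algebra_simps)
  then have "real N / real (N - m) \<le> real (Suc X) / real (Suc X - m)"
    using pos assms by (simp add: divide_simps)
  then show ?thesis unfolding absorb by (rule mult_right_mono) simp
qed

lemma choose_add_ge_power_mult:
  assumes "m \<le> M" and "M + D \<le> N"
  shows "(real N / real (N - m)) ^ D * real (M choose m) \<le> real ((M + D) choose m)"
  using assms(2)
proof (induction D)
  case 0
  then show ?case by simp
next
  case (Suc D)
  have "(real N / real (N - m)) ^ Suc D * real (M choose m)
      = real N / real (N - m) * ((real N / real (N - m)) ^ D * real (M choose m))"
    by (simp add: mult.assoc)
  also have "\<dots> \<le> real N / real (N - m) * real ((M + D) choose m)"
    using Suc by (intro mult_left_mono) auto
  also have "\<dots> \<le> real (Suc (M + D) choose m)"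
    using Suc.prems assms(1) by (intro choose_Suc_ge_mult) auto
  finally show ?case by simp
qed

lemma powr_ge_one_minus_mult:
  fixes x \<delta> E :: real
  assumes "x > 0" and "1 / x \<le> 1 + \<delta>" and "E \<ge> 0"
  shows "1 - E * \<delta> \<le> x powr E"
proof -
  have "ln (1 / x) \<le> 1 / x - 1" using assms(1) by (intro ln_le_minus_one) simp
  then have "- \<delta> \<le> ln x" using assms(1,2) by (simp add: ln_div)
  then have "E * (- \<delta>) \<le> E * ln x" using assms(3) by (rule mult_left_mono)
  then have "1 - E * \<delta> \<le> 1 + E * ln x" by simp
  also have "\<dots> \<le> exp (E * ln x)" by (rule exp_ge_add_one_self)
  finally show ?thesis using assms(1) by (simp add: powr_def mult.commute)
qed

lemma powr_edge_ratio_ge: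
  fixes p E :: real and m N :: nat
  assumes p: "0 < p" "p < 1" and m: "p * real N - 1 < real m" "m < N" and E: "0 \<le> E"
  shows "(1 - E / ((1 - p) * real N)) * (1 / (1 - p)) powr E \<le> (real N / real (N - m)) powr E"
proof -
  define t where "t = (1 - p) * real N / real (N - m)"
  have N: "real N > 0" and Nm: "real (N - m) = real N - real m" using m by (simp_all add: of_nat_diff)
  have t: "t > 0" unfolding t_def using p m by simp
  have "1 / t = (real N - real m) / ((1 - p) * real N)" unfolding t_def Nm by simp
  also have "\<dots> \<le> ((1 - p) * real N + 1) / ((1 - p) * real N)"
    using p N m(1) by (intro divide_right_mono) (simp_all add: algebra_simps)
  also have "\<dots> = 1 + 1 / ((1 - p) * real N)" using p N by (simp add: field_simps)
  finally have inv_t: "1 / t \<le> 1 + 1 / ((1 - p) * real N)" .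
  have "1 - E / ((1 - p) * real N) \<le> t powr E"
    using powr_ge_one_minus_mult[OF t inv_t E] by simp
  then have "(1 - E / ((1 - p) * real N)) * (1 / (1 - p)) powr E \<le> t powr E * (1 / (1 - p)) powr E"
    by (rule mult_right_mono) simp
  also have "\<dots> = (t * (1 / (1 - p))) powr E" by (rule powr_mult[symmetric])
  also have "t * (1 / (1 - p)) = real N / real (N - m)" unfolding t_def using p by simp
  finally show ?thesis .
qed

lemma m_of_bounds:
  assumes "0 < p"
  shows "real (m_of p n) \<le> p * real (n choose 2)" and "p * real (n choose 2) - 1 < real (m_of p n)"
proof -
  have "real (m_of p n) = real_of_int \<lfloor>p * real (n choose 2)\<rfloor>"
    unfolding m_of_def using assms by simp
  then show "real (m_of p n) \<le> p * real (n choose 2)" "p * real (n choose 2) - 1 < real (m_of p n)"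
    by linarith+
qed

lemma mu_Suc_div_mu_ge:
  fixes p :: real
  assumes p: "0 < p" "p < 1" and k: "k > 0" and small: "n div k < k"
    and room: "m_of p n + inner_pairs n k \<le> n choose 2" and pairs: "n choose 2 > 0"
    and E: "0 \<le> ratio_exponent n k"
  shows "(1 - ratio_exponent n k / ((1 - p) * real (n choose 2))) * (1 / (1 - p)) powr ratio_exponent n k
    \<le> mu p n (k + 1) / mu p n k"
proof -
  define N m where "N = n choose 2" and "m = m_of p n"
  define M D where "M = N - inner_pairs n k" and "D = inner_pairs n k - inner_pairs n (k + 1)"
  define c c' where "c = card {P. ordered_equipartition n k P}"
    and "c' = card {P. ordered_equipartition n (k + 1) P}"
  define r where "r = real N / real (N - m)"
  have "p * real N < 1 * real N" using p pairs unfolding N_def by (intro mult_strict_right_mono) simp_all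
  then have m_N: "p * real N - 1 < real m" "m < N"
    using m_of_bounds[OF p(1), of n] unfolding m_def N_def by simp_all
  have D: "ratio_exponent n k \<le> real D" "inner_pairs n (k + 1) \<le> inner_pairs n k"
    using ratio_exponent_le_inner_pairs_diff[OF k small] E unfolding D_def by (simp_all add: of_nat_diff)
  have mM: "m \<le> M" and MD: "M + D = N - inner_pairs n (k + 1)"
    using room D(2) unfolding M_def D_def N_def m_def by simp_all
  have c: "0 < c" "c \<le> c'"
    using card_ordered_equipartitions[OF k, of n] card_ordered_equipartitions_Suc_ge[OF k small]
    unfolding c_def c'_def by (auto intro: Nat.gr0I)
  have graphs: "real (card (graphs_nm n m)) > 0" using m_N unfolding card_graphs_nm N_def by simp
  have mu_k: "mu p n k = real c * real (M choose m) / real (card (graphs_nm n m))"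
    using mu_mult_card_graphs_nm[OF k, of p n] graphs
    unfolding c_def M_def N_def m_def by (simp add: field_simps)
  have mu_Suc: "mu p n (k + 1) = real c' * real ((M + D) choose m) / real (card (graphs_nm n m))"
    using mu_mult_card_graphs_nm[of "k + 1" p n] graphs
    unfolding MD c'_def N_def m_def by (simp add: field_simps)
  have ratio: "mu p n (k + 1) / mu p n k
      = real c' / real c * (real ((M + D) choose m) / real (M choose m))"
    unfolding mu_k mu_Suc using graphs by simp
  have "r powr ratio_exponent n k \<le> r ^ D"
    using powr_mono[OF D(1)] m_N unfolding r_def by (simp add: powr_realpow)
  also have "\<dots> \<le> real ((M + D) choose m) / real (M choose m)"
    using choose_add_ge_power_mult[OF mM, of D N] mM MD unfolding r_def by (simp add: field_simps)
  also have "\<dots> \<le> mu p n (k + 1) / mu p n k"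
  proof -
    have "1 \<le> real c' / real c" using c by simp
    from mult_right_mono[OF this, of "real ((M + D) choose m) / real (M choose m)"]
    show ?thesis unfolding ratio by simp
  qed
  finally show ?thesis
    using powr_edge_ratio_ge[OF p m_N E] unfolding r_def N_def by linarith
qed

section \<open>The asymptotic regime\<close>

lemma real_choose_two: "real (n choose 2) = real n * (real n - 1) / 2"
proof -
  have "real (2 * (n choose 2) + n) = real (n * n)" by (simp only: two_mult_choose_two_add)
  then show ?thesis by (simp add: algebra_simps)
qed

lemma mu_Suc_div_mu_ge_regime:
  fixes p :: real and n k :: nat
  assumes p: "0 < p" "p < 1" and n: "3 \<le> n" and k: "k > 0"
    and lower: "2 \<le> real n / real k" and square: "(real n / real k)\<^sup>2 < real n"
    and upper: "real n / real k \<le> (1 - p) * (real n - 1)"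
  shows "(1 - ratio_exponent n k / ((1 - p) * real (n choose 2))) * (1 / (1 - p)) powr ratio_exponent n k
      \<le> mu p n (k + 1) / mu p n k"
    and "0 \<le> ratio_exponent n k / ((1 - p) * real (n choose 2))"
    and "ratio_exponent n k / ((1 - p) * real (n choose 2))
      \<le> (real n / real k)\<^sup>2 / ((1 - p) * (real n * (real n - 1)))"
proof -
  define L where "L = real n / real k"
  have kpos: "real k > 0" and npos: "real n \<ge> 3" using k n by simp_all
  have N: "real (n choose 2) = real n * (real n - 1) / 2" by (rule real_choose_two)
  have NP: "(1 - p) * real (n choose 2) > 0" unfolding N using p npos by simp
  have "L * L < L * real k" using square kpos unfolding L_def by (simp add: power2_eq_square)
  moreover have "0 < L" using lower unfolding L_def by simp
  ultimately have "L < real k" by (simp add: mult_less_cancel_left_pos)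
  then have "real (n div k) < real k" using of_nat_div_le_of_nat[of n k, where 'a = real] unfolding L_def by linarith
  then have small: "n div k < k" by simp
  have E: "0 \<le> ratio_exponent n k"
    using lower kpos by (intro ratio_exponent_nonneg[OF k]) (simp add: field_simps)
  have "2 * real (inner_pairs n k) \<le> real n * ((1 - p) * (real n - 1))"
    using inner_pairs_le[OF k, of n] upper npos by (smt (verit) mult_left_mono)
  then have "real (m_of p n) + real (inner_pairs n k) \<le> real (n choose 2)"
    using m_of_bounds(1)[OF p(1), of n] unfolding N by (simp add: algebra_simps)
  then have room: "m_of p n + inner_pairs n k \<le> n choose 2" by linarith
  have pairs: "n choose 2 > 0" using NP p n by simp
  show "(1 - ratio_exponent n k / ((1 - p) * real (n choose 2))) * (1 / (1 - p)) powr ratio_exponent n k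
      \<le> mu p n (k + 1) / mu p n k"
    by (rule mu_Suc_div_mu_ge[OF p k small room pairs E])
  show "0 \<le> ratio_exponent n k / ((1 - p) * real (n choose 2))" using E NP by simp
  have "ratio_exponent n k / ((1 - p) * real (n choose 2)) \<le> (L\<^sup>2 / 2) / ((1 - p) * real (n choose 2))"
    using ratio_exponent_le[OF k, of n] NP unfolding L_def by (intro divide_right_mono) simp_all
  then show "ratio_exponent n k / ((1 - p) * real (n choose 2))
      \<le> (real n / real k)\<^sup>2 / ((1 - p) * (real n * (real n - 1)))"
    unfolding N L_def by simp
qed

lemma mu_Suc_div_mu_asymptotic:
  fixes p :: real and k :: "nat \<Rightarrow> nat"
  assumes p: "0 < p" "p < 1" and k: "\<And>n. k n > 0"
    and lower: "\<forall>\<^sub>F n in at_top. 2 \<le> real n / real (k n)"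
    and upper: "(\<lambda>n. real n / real (k n)) \<in> O(\<lambda>n. ln (real n))"
  shows "\<exists>\<epsilon>. \<epsilon> \<longlonglongrightarrow> 0 \<and> (\<forall>\<^sub>F n in at_top.
    (1 + \<epsilon> n) * (1 / (1 - p)) powr ratio_exponent n (k n) \<le> mu p n (k n + 1) / mu p n (k n))"
proof -
  obtain C where C: "C > 0" and upper_C: "\<forall>\<^sub>F n in at_top. norm (real n / real (k n)) \<le> C * norm (ln (real n))"
    using landau_o.bigE[OF upper] by blast
  define \<epsilon> where "\<epsilon> n = - (ratio_exponent n (k n) / ((1 - p) * real (n choose 2)))" for n
  define bound where "bound n = (C * ln (real n))\<^sup>2 / ((1 - p) * (real n * (real n - 1)))" for n
  have "\<forall>\<^sub>F n in at_top. (C * ln (real n))\<^sup>2 < real n" using C by real_asymp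
  moreover have "\<forall>\<^sub>F n in at_top. C * ln (real n) \<le> (1 - p) * (real n - 1)" using C p by real_asymp
  moreover have "\<forall>\<^sub>F n in at_top. 3 \<le> (n::nat)" by (rule eventually_ge_at_top)
  ultimately have ev: "\<forall>\<^sub>F n in at_top. - bound n \<le> \<epsilon> n \<and> \<epsilon> n \<le> 0 \<and>
      (1 + \<epsilon> n) * (1 / (1 - p)) powr ratio_exponent n (k n) \<le> mu p n (k n + 1) / mu p n (k n)"
    using lower upper_C
  proof eventually_elim
    case (elim n)
    have L: "0 \<le> real n / real (k n)" "real n / real (k n) \<le> C * ln (real n)" using elim by simp_all
    then have sq: "(real n / real (k n))\<^sup>2 \<le> (C * ln (real n))\<^sup>2" by (rule power_mono[rotated])
    have "2 \<le> real n / real (k n)" "(real n / real (k n))\<^sup>2 < real n"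
      "real n / real (k n) \<le> (1 - p) * (real n - 1)"
      using elim L sq by linarith+
    note regime = mu_Suc_div_mu_ge_regime[OF p \<open>3 \<le> n\<close> k this]
    have "(real n / real (k n))\<^sup>2 / ((1 - p) * (real n * (real n - 1))) \<le> bound n"
      unfolding bound_def using sq p \<open>3 \<le> n\<close> by (intro divide_right_mono) auto
    then have "- bound n \<le> \<epsilon> n" using regime(3) unfolding \<epsilon>_def by linarith
    moreover have "\<epsilon> n \<le> 0" using regime(2) unfolding \<epsilon>_def by simp
    moreover have "(1 + \<epsilon> n) * (1 / (1 - p)) powr ratio_exponent n (k n) \<le> mu p n (k n + 1) / mu p n (k n)"
      using regime(1) unfolding \<epsilon>_def by simp
    ultimately show ?case by blast
  qed
  have "(\<lambda>n. - bound n) \<longlonglongrightarrow> 0" unfolding bound_def using p C by real_asymp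
  moreover have "\<forall>\<^sub>F n in at_top. - bound n \<le> \<epsilon> n" and "\<forall>\<^sub>F n in at_top. \<epsilon> n \<le> 0"
    using ev by (auto elim: eventually_mono)
  ultimately have "\<epsilon> \<longlonglongrightarrow> 0" by (intro tendsto_sandwich[of "\<lambda>n. - bound n" \<epsilon> _ "\<lambda>_. 0"]) simp_all
  moreover have "\<forall>\<^sub>F n in at_top.
      (1 + \<epsilon> n) * (1 / (1 - p)) powr ratio_exponent n (k n) \<le> mu p n (k n + 1) / mu p n (k n)"
    using ev by (auto elim: eventually_mono)
  ultimately show ?thesis by blast
qed

lemma eventually_ge_two_and_bigo_ln:
  fixes f \<gamma> :: "nat \<Rightarrow> real"
  assumes lim: "filterlim \<gamma> at_top at_top" and \<gamma>: "\<gamma> \<in> O(\<lambda>n. ln (real n))"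
    and close: "(\<lambda>n. f n - \<gamma> n) \<in> O(\<lambda>_. 1)"
  shows "\<forall>\<^sub>F n in at_top. 2 \<le> f n" and "f \<in> O(\<lambda>n. ln (real n))"
proof -
  obtain C where "\<forall>\<^sub>F n in at_top. norm (f n - \<gamma> n) \<le> C * norm (1::real)"
    using landau_o.bigE[OF close] by blast
  moreover have "\<forall>\<^sub>F n in at_top. C + 2 \<le> \<gamma> n" using lim by (simp add: filterlim_at_top)
  ultimately show "\<forall>\<^sub>F n in at_top. 2 \<le> f n" by eventually_elim auto
  have "(\<lambda>_. 1 :: real) \<in> O(\<lambda>n. ln (real n))" by real_asymp
  with close have "(\<lambda>n. f n - \<gamma> n) \<in> O(\<lambda>n. ln (real n))" by (rule landau_o.big_trans)
  from sum_in_bigo(1)[OF this \<gamma>] show "f \<in> O(\<lambda>n. ln (real n))" by simp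
qed

theorem lemma2:
  fixes p b :: real and \<gamma> :: "nat \<Rightarrow> real" and k :: "nat \<Rightarrow> nat"
  assumes "0 < p" and "p < 1 - 1 / exp 2"
    and "b = 1 / (1 - p)"
    and "\<And>n. \<gamma> n = 2 * log b (real n) - 2 * log b (log b (real n)) - 2 * log b 2"
    and "\<And>n. k n > 0"
    and "(\<lambda>n. real n / real (k n) - \<gamma> n) \<in> O(\<lambda>_. 1)"
  shows "\<exists>\<epsilon> :: nat \<Rightarrow> real. \<epsilon> \<longlonglongrightarrow> 0 \<and>
    (\<forall>\<^sub>F n in at_top. mu p n (k n + 1) / mu p n (k n) \<ge>
       (1 + \<epsilon> n) * b powr ((real n)\<^sup>2 / (2 * real (k n) * real (k n + 1)) - real n / (2 * real (k n))))"
proof -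
  have "0 < 1 / exp (2 :: real)" by simp
  then have p: "0 < p" "p < 1" using assms(1,2) by linarith+
  then have "ln b > 0" unfolding assms(3) by (simp add: ln_div)
  have \<gamma>_eq: "\<gamma> = (\<lambda>n. 2 * (ln (real n) / ln b) - 2 * (ln (ln (real n) / ln b) / ln b) - 2 * (ln 2 / ln b))"
    by (simp add: fun_eq_iff assms(4) log_def)
  have "filterlim \<gamma> at_top at_top" and "\<gamma> \<in> O(\<lambda>n. ln (real n))"
    unfolding \<gamma>_eq using \<open>ln b > 0\<close> by real_asymp+
  from eventually_ge_two_and_bigo_ln[OF this assms(6)]
  have "\<forall>\<^sub>F n in at_top. 2 \<le> real n / real (k n)" and "(\<lambda>n. real n / real (k n)) \<in> O(\<lambda>n. ln (real n))"
    by simp_all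
  from mu_Suc_div_mu_asymptotic[OF p assms(5) this]
  show ?thesis unfolding assms(3) ratio_exponent_def .
qed

end
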